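(* For a positive integer $d$, a vector $y\in\mathbb{R}^d$ and a positive integer $q$, let $$\mathbf{R}_q(y) = \mathbf{E}\Big(\sum_{i\neq j} y_i y_j r_i r_j\Big)^q,$$ where $r_1,\ldots,r_d$ are independent Rademacher random variables (each $\pm1$ with probability $1/2$) and the sum runs over ordered pairs $(i,j)$, $i\ne j$, in $\{1,\ldots,d\}$. Let $x\in\mathbb{R}^n$ be nonzero, let $K=\|x\|_0$ be its number of nonzero coordinates, and let $$x^* = \Big(\tfrac{\|x\|_2}{\sqrt{K}},\ldots,\tfrac{\|x\|_2}{\sqrt{K}}\Big)\in\mathbb{R}^K.$$ Then for every positive integer $q$, $$\mathbf{R}_q(x)\le \mathbf{R}_q(x^* ),$$ and moreover $$\mathbf{R}_q(x^* ) = \|x\|_2^{2q}\,\mathbf{E}\big(\bar B^2-1\big)^q,$$ where $\bar B = \frac{B-K/2}{\sqrt{K/4}}$ and $B\sim\mathsf{Binom}(K,1/2)$. *)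

theory Defs
  imports "HOL-Probability.Probability"
begin

text \<open>Vectors in R^d are modelled as functions nat => real, only indices 0..d-1 matter.
  Rademacher vector: d independent uniform signs in {-1,1} (Pi_pmf of pmf_of_set).\<close>

definition rademacher_vec :: "nat \<Rightarrow> (nat \<Rightarrow> real) pmf" where
  "rademacher_vec d = Pi_pmf {..<d} 0 (\<lambda>_. pmf_of_set {-1, 1})"

definition R_moment :: "nat \<Rightarrow> (nat \<Rightarrow> real) \<Rightarrow> nat \<Rightarrow> real" where
  "R_moment d y q = measure_pmf.expectation (rademacher_vec d)
     (\<lambda>r. (\<Sum>i<d. \<Sum>j<d. if i \<noteq> j then y i * y j * r i * r j else 0) ^ q)"

definition l2norm :: "nat \<Rightarrow> (nat \<Rightarrow> real) \<Rightarrow> real" where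
  "l2norm n x = sqrt (\<Sum>i<n. (x i)^2)"

definition l0norm :: "nat \<Rightarrow> (nat \<Rightarrow> real) \<Rightarrow> nat" where
  "l0norm n x = card {i. i < n \<and> x i \<noteq> 0}"

end

(*
  Write T = \<Sum>i. r\<^sub>i y\<^sub>i. Since r\<^sub>i\<^sup>2 = 1, the chaos equals T\<^sup>2 - |y|\<^sup>2, so
  R\<^sub>q(y) = E (T\<^sup>2 - |y|\<^sup>2)\<^sup>q depends only on the multiset of the |y\<^sub>i| with y\<^sub>i \<noteq> 0.
  Averaging over the signs of two coordinates a, b shifts T by \<plusminus>(a + b) and \<plusminus>(a - b),
  and (a \<plusminus> b)\<^sup>2 = a\<^sup>2 + b\<^sup>2 \<plusminus> 2ab; expanding binomially, R\<^sub>q is a combination of the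
  mixed moments E T\<^sup>j (T\<^sup>2 - |y'|\<^sup>2)\<^sup>k of the remaining coordinates y', whose
  coefficients are nondecreasing in ab \<ge> 0 for fixed a\<^sup>2 + b\<^sup>2. These mixed moments are
  nonnegative, because adding a coordinate only ever contributes even powers of it.
  Hence replacing a pair with a\<^sup>2 > \<mu> > b\<^sup>2, where \<mu> = |x|\<^sup>2/K, by (\<surd>\<mu>, \<surd>(a\<^sup>2 + b\<^sup>2 - \<mu>))
  does not decrease R\<^sub>q, and after finitely many such steps every entry equals \<surd>\<mu>.
  For the flat vector, T = \<surd>\<mu> (2B - K) with B ~ Binom(K, 1/2), which gives the binomial formula.
*)

theory Submission
  imports Defs
begin

text \<open>\<open>sign_mean ys g\<close> is the expectation of \<open>g (\<Sum>i. r\<^sub>i * ys!i)\<close> for independent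
  uniform signs \<open>r\<^sub>i \<in> {-1, 1}\<close>.\<close>

primrec sign_mean :: "real list \<Rightarrow> (real \<Rightarrow> real) \<Rightarrow> real" where
  "sign_mean [] g = g 0"
| "sign_mean (y # ys) g = (sign_mean ys (\<lambda>T. g (T + y)) + sign_mean ys (\<lambda>T. g (T - y))) / 2"

lemma sign_mean_add: "sign_mean ys (\<lambda>T. f T + g T) = sign_mean ys f + sign_mean ys g"
  by (induction ys arbitrary: f g) (simp_all add: field_simps)

lemma sign_mean_cmult: "sign_mean ys (\<lambda>T. c * f T) = c * sign_mean ys f"
  by (induction ys arbitrary: f) (simp_all add: field_simps)

lemma sign_mean_sum: "sign_mean ys (\<lambda>T. \<Sum>i\<in>A. f i T) = (\<Sum>i\<in>A. sign_mean ys (f i))"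
proof -
  have zero: "sign_mean ys (\<lambda>T. 0) = 0"
    by (induction ys) simp_all
  show ?thesis
  proof (cases "finite A")
    case True
    then show ?thesis
      by (induction A rule: finite_induct) (simp_all add: zero sign_mean_add)
  qed (simp add: zero)
qed

lemma sign_mean_swap: "sign_mean (a # b # ys) g = sign_mean (b # a # ys) g"
proof -
  have "(\<lambda>T. g (T + b + a)) = (\<lambda>T. g (T + a + b))" "(\<lambda>T. g (T - b + a)) = (\<lambda>T. g (T + a - b))"
    "(\<lambda>T. g (T + b - a)) = (\<lambda>T. g (T - a + b))" "(\<lambda>T. g (T - b - a)) = (\<lambda>T. g (T - a - b))"
    by (simp_all add: algebra_simps)
  then show ?thesis
    by (simp add: field_simps)
qed

lemma sign_mean_append_Cons: "sign_mean (xs @ y # zs) g = sign_mean (y # xs @ zs) g"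
proof (induction xs arbitrary: g)
  case (Cons x xs)
  have "sign_mean ((x # xs) @ y # zs) g = sign_mean (x # y # xs @ zs) g"
    by (simp only: append_Cons sign_mean.simps(2) Cons.IH)
  also have "\<dots> = sign_mean (y # (x # xs) @ zs) g"
    by (simp only: append_Cons) (rule sign_mean_swap)
  finally show ?case .
qed simp

lemma sign_mean_perm: "mset xs = mset ys \<Longrightarrow> sign_mean xs g = sign_mean ys g"
proof (induction xs arbitrary: ys g)
  case (Cons x xs)
  then obtain us vs where ys: "ys = us @ x # vs"
    by (metis list.set_intros(1) set_mset_mset split_list)
  with Cons.prems have perm: "mset xs = mset (us @ vs)"
    by simp
  have "sign_mean (x # xs) g = sign_mean (x # us @ vs) g"
    by (simp add: Cons.IH[OF perm])
  then show ?case
    by (simp only: ys sign_mean_append_Cons)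
qed simp

lemma sign_mean_abs_Cons: "sign_mean (\<bar>y\<bar> # ys) g = sign_mean (y # ys) g"
  by (cases "y \<ge> 0") (simp_all add: add.commute)

lemma sign_mean_filter_nonzero:
  "sign_mean (map x xs) g = sign_mean (map (\<lambda>i. \<bar>x i\<bar>) (filter (\<lambda>i. x i \<noteq> 0) xs)) g"
proof (induction xs arbitrary: g)
  case (Cons a xs)
  have "sign_mean (map x (a # xs)) g = sign_mean (x a # map (\<lambda>i. \<bar>x i\<bar>) (filter (\<lambda>i. x i \<noteq> 0) xs)) g"
    by (simp add: Cons.IH)
  then show ?case
    by (simp only: sign_mean_abs_Cons[symmetric, of "x a"]) (cases "x a = 0"; simp)
qed simp

definition sum_squares :: "real list \<Rightarrow> real" where
  "sum_squares ys = (\<Sum>y\<leftarrow>ys. y\<^sup>2)"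

lemma sum_squares_Nil [simp]: "sum_squares [] = 0"
  and sum_squares_Cons [simp]: "sum_squares (y # ys) = y\<^sup>2 + sum_squares ys"
  by (simp_all add: sum_squares_def)

lemma sum_squares_perm: "mset xs = mset ys \<Longrightarrow> sum_squares xs = sum_squares ys"
  unfolding sum_squares_def by (metis mset_map sum_mset_sum_list)

definition mixed_moment :: "real list \<Rightarrow> nat \<Rightarrow> nat \<Rightarrow> real" where
  "mixed_moment ys m k = sign_mean ys (\<lambda>T. T ^ m * (T\<^sup>2 - sum_squares ys) ^ k)"

lemma power_add_power_minus: "x ^ n + (- x) ^ n = (if even n then 2 * x ^ n else (0::real))"
  by (simp add: power_minus_even power_minus_odd)

lemma power_add_power_minus_nonneg: "0 \<le> x ^ n + (- x) ^ n" for x :: real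
  by (simp add: power_add_power_minus zero_le_even_power)

lemma power_add_power_minus_mono:
  fixes u w :: real
  assumes "0 \<le> u" "u \<le> w"
  shows "u ^ n + (- u) ^ n \<le> w ^ n + (- w) ^ n"
  using power_mono[OF assms(2,1)] by (simp add: power_add_power_minus)

lemma shift_mixed_expand:
  fixes T y c :: real
  shows "(T + y) ^ m * ((T + y)\<^sup>2 - (y\<^sup>2 + c)) ^ k =
    (\<Sum>i\<le>m. \<Sum>l\<le>k. (of_nat (m choose i) * of_nat (k choose l) * 2 ^ l * y ^ (i + l)) *
        (T ^ (m - i + l) * (T\<^sup>2 - c) ^ (k - l)))"
proof -
  have sq: "(T + y)\<^sup>2 - (y\<^sup>2 + c) = 2 * y * T + (T\<^sup>2 - c)"
    by (simp add: power2_eq_square algebra_simps)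
  show ?thesis
    unfolding sq binomial_ring[of y T m, unfolded add.commute[of y]]
      binomial_ring[of "2 * y * T" "T\<^sup>2 - c" k] sum_product
    by (intro sum.cong refl, simp only: power_add power_mult_distrib, simp add: ac_simps)
qed

lemma mixed_moment_Cons:
  "mixed_moment (y # ys) m k = (\<Sum>i\<le>m. \<Sum>l\<le>k. of_nat (m choose i) * of_nat (k choose l) * 2 ^ l *
      (y ^ (i + l) + (- y) ^ (i + l)) * mixed_moment ys (m - i + l) (k - l)) / 2"
proof -
  have shifted: "sign_mean ys (\<lambda>T. (T + z) ^ m * ((T + z)\<^sup>2 - (z\<^sup>2 + sum_squares ys)) ^ k) =
    (\<Sum>i\<le>m. \<Sum>l\<le>k. of_nat (m choose i) * of_nat (k choose l) * 2 ^ l * z ^ (i + l)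
      * mixed_moment ys (m - i + l) (k - l))" for z
    unfolding shift_mixed_expand sign_mean_sum sign_mean_cmult mixed_moment_def ..
  have "mixed_moment (y # ys) m k =
     (sign_mean ys (\<lambda>T. (T + y) ^ m * ((T + y)\<^sup>2 - (y\<^sup>2 + sum_squares ys)) ^ k)
    + sign_mean ys (\<lambda>T. (T + - y) ^ m * ((T + - y)\<^sup>2 - ((- y)\<^sup>2 + sum_squares ys)) ^ k)) / 2"
    unfolding mixed_moment_def by simp
  then show ?thesis
    unfolding shifted by (simp add: sum.distrib[symmetric] algebra_simps)
qed

lemma mixed_moment_nonneg: "0 \<le> mixed_moment ys m k"
proof (induction ys arbitrary: m k)
  case Nil
  then show ?case by (simp add: mixed_moment_def)
next
  case (Cons y ys)
  show ?case
    unfolding mixed_moment_Cons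
    by (intro divide_nonneg_pos sum_nonneg mult_nonneg_nonneg Cons.IH
        power_add_power_minus_nonneg) auto
qed

text \<open>Averaging over the signs of a pair \<open>a, b\<close> shifts \<open>T\<close> by \<open>\<plusminus>(a + b)\<close> and \<open>\<plusminus>(a - b)\<close>;
  with \<open>s = a\<^sup>2 + b\<^sup>2\<close> and \<open>p = 2ab\<close> the squared shifts are \<open>s \<plusminus> p\<close>, which is where
  \<open>pair_coeff\<close> comes from.\<close>

definition pair_coeff :: "real \<Rightarrow> real \<Rightarrow> nat \<Rightarrow> nat \<Rightarrow> real" where
  "pair_coeff s p h e = (s + p) ^ h * p ^ e + (s - p) ^ h * (- p) ^ e"

lemma pair_coeff_mono:
  assumes "0 \<le> s" "0 \<le> p" "p \<le> p'"
  shows "pair_coeff s p h e \<le> pair_coeff s p' h e"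
proof -
  have binomial: "pair_coeff s w h e =
      (\<Sum>l\<le>h. of_nat (h choose l) * s ^ (h - l) * (w ^ (l + e) + (- w) ^ (l + e)))" for w
  proof -
    have plus: "(s + w) ^ h = (\<Sum>l\<le>h. of_nat (h choose l) * w ^ l * s ^ (h - l))"
      using binomial_ring[of w s h] by (simp add: add.commute)
    have minus: "(s - w) ^ h = (\<Sum>l\<le>h. of_nat (h choose l) * (- w) ^ l * s ^ (h - l))"
      using binomial_ring[of "- w" s h] by simp
    show ?thesis
      unfolding pair_coeff_def plus minus sum_distrib_right sum.distrib[symmetric]
      by (intro sum.cong refl, simp only: power_add distrib_left, simp add: ac_simps)
  qed
  show ?thesis
    unfolding binomial
    by (intro sum_mono mult_left_mono power_add_power_minus_mono) (use assms in auto)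
qed

lemma even_power_pair_coeff:
  fixes L\<^sub>1 L\<^sub>2 s p :: real
  assumes "L\<^sub>1\<^sup>2 = s + p" "L\<^sub>2\<^sup>2 = s - p"
  shows "((2 * L\<^sub>1) ^ j + (- (2 * L\<^sub>1)) ^ j) * p ^ e + ((2 * L\<^sub>2) ^ j + (- (2 * L\<^sub>2)) ^ j) * (- p) ^ e =
    (if even j then 2 * 2 ^ j * pair_coeff s p (j div 2) e else 0)"
proof (cases "even j")
  case True
  have pw: "(- (2 * L)) ^ j = (2 * L) ^ j" "(2 * L) ^ j = 2 ^ j * (L\<^sup>2) ^ (j div 2)" for L :: real
    using True by (simp_all add: power_mult[symmetric] power_mult_distrib)
  show ?thesis
    unfolding pw(1) unfolding pw(2) assms using True by (simp add: pair_coeff_def algebra_simps)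
qed (simp add: power_add_power_minus)

lemma shift_square_expand:
  fixes T L s c :: real
  shows "((T + L)\<^sup>2 - (s + c)) ^ q = (\<Sum>k\<le>q. \<Sum>j\<le>k.
     (of_nat (q choose k) * of_nat (k choose j) * (2 * L) ^ j * (L\<^sup>2 - s) ^ (k - j)) * (T ^ j * (T\<^sup>2 - c) ^ (q - k)))"
proof -
  have sq: "(T + L)\<^sup>2 - (s + c) = (2 * L * T + (L\<^sup>2 - s)) + (T\<^sup>2 - c)"
    by (simp add: power2_eq_square algebra_simps)
  show ?thesis
    unfolding sq binomial_ring[of "2 * L * T + (L\<^sup>2 - s)"] binomial_ring[of "2 * L * T" "L\<^sup>2 - s"]
    by (intro sum.cong refl, simp only: power_mult_distrib sum_distrib_left sum_distrib_right,
        intro sum.cong refl, simp add: ac_simps)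
qed

lemma sign_mean_shift_square:
  "sign_mean ys (\<lambda>T. ((T + L)\<^sup>2 - (s + sum_squares ys)) ^ q) = (\<Sum>k\<le>q. \<Sum>j\<le>k.
     of_nat (q choose k) * of_nat (k choose j) * (2 * L) ^ j * (L\<^sup>2 - s) ^ (k - j) * mixed_moment ys j (q - k))"
  unfolding shift_square_expand sign_mean_sum sign_mean_cmult mixed_moment_def by (simp add: mult.assoc)

lemma sign_mean_pair:
  "sign_mean (a # b # ys) (\<lambda>T. (T\<^sup>2 - (a\<^sup>2 + b\<^sup>2 + sum_squares ys)) ^ q) =
    (\<Sum>k\<le>q. \<Sum>j\<le>k. of_nat (q choose k) * of_nat (k choose j) *
      (if even j then 2 ^ j * pair_coeff (a\<^sup>2 + b\<^sup>2) (2 * (a * b)) (j div 2) (k - j) else 0) *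
      mixed_moment ys j (q - k)) / 2"
proof -
  define s where "s = a\<^sup>2 + b\<^sup>2"
  define f where "f = (\<lambda>T::real. (T\<^sup>2 - (s + sum_squares ys)) ^ q)"
  have shifts: "(\<lambda>T. f (T + b + a)) = (\<lambda>T. ((T + (a + b))\<^sup>2 - (s + sum_squares ys)) ^ q)"
    "(\<lambda>T. f (T - b - a)) = (\<lambda>T. ((T + - (a + b))\<^sup>2 - (s + sum_squares ys)) ^ q)"
    "(\<lambda>T. f (T - b + a)) = (\<lambda>T. ((T + (a - b))\<^sup>2 - (s + sum_squares ys)) ^ q)"
    "(\<lambda>T. f (T + b - a)) = (\<lambda>T. ((T + - (a - b))\<^sup>2 - (s + sum_squares ys)) ^ q)"
    unfolding f_def by (simp_all add: algebra_simps)
  have squares: "(a + b)\<^sup>2 - s = 2 * (a * b)" "(a - b)\<^sup>2 - s = - (2 * (a * b))"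
      "(- (a + b))\<^sup>2 - s = 2 * (a * b)" "(- (a - b))\<^sup>2 - s = - (2 * (a * b))"
    unfolding s_def by (simp_all add: power2_eq_square algebra_simps)
  have coeff: "((2 * (a + b)) ^ j + (- (2 * (a + b))) ^ j) * (2 * (a * b)) ^ e
      + ((2 * (a - b)) ^ j + (- (2 * (a - b))) ^ j) * (- (2 * (a * b))) ^ e
      = (if even j then 2 * 2 ^ j * pair_coeff s (2 * (a * b)) (j div 2) e else 0)" for j e
    by (rule even_power_pair_coeff) (use squares in simp_all)
  have "sign_mean (a # b # ys) f = ((sign_mean ys (\<lambda>T. f (T + b + a)) + sign_mean ys (\<lambda>T. f (T - b + a))) / 2
      + (sign_mean ys (\<lambda>T. f (T + b - a)) + sign_mean ys (\<lambda>T. f (T - b - a))) / 2) / 2"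
    by simp
  also have "\<dots> = (\<Sum>k\<le>q. \<Sum>j\<le>k. of_nat (q choose k) * of_nat (k choose j) *
      (((2 * (a + b)) ^ j + (- (2 * (a + b))) ^ j) * (2 * (a * b)) ^ (k - j)
      + ((2 * (a - b)) ^ j + (- (2 * (a - b))) ^ j) * (- (2 * (a * b))) ^ (k - j)) *
      mixed_moment ys j (q - k)) / 4"
    unfolding shifts sign_mean_shift_square squares mult_minus_right
    by (simp add: ring_distribs sum.distrib add_divide_distrib ac_simps)
  also have "\<dots> = (\<Sum>k\<le>q. \<Sum>j\<le>k. of_nat (q choose k) * of_nat (k choose j) *
      (if even j then 2 ^ j * pair_coeff s (2 * (a * b)) (j div 2) (k - j) else 0) *
      mixed_moment ys j (q - k)) / 2"
    unfolding coeff sum_divide_distrib by (intro sum.cong refl) auto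
  finally show ?thesis
    unfolding f_def s_def by (simp add: add.assoc)
qed

lemma sign_mean_pair_mono:
  assumes "a\<^sup>2 + b\<^sup>2 = a'\<^sup>2 + b'\<^sup>2" "0 \<le> a * b" "a * b \<le> a' * b'"
  shows "sign_mean (a # b # ys) (\<lambda>T. (T\<^sup>2 - (a\<^sup>2 + b\<^sup>2 + sum_squares ys)) ^ q)
       \<le> sign_mean (a' # b' # ys) (\<lambda>T. (T\<^sup>2 - (a'\<^sup>2 + b'\<^sup>2 + sum_squares ys)) ^ q)"
  unfolding sign_mean_pair unfolding assms(1)
  by (intro divide_right_mono sum_mono mult_right_mono mult_left_mono mixed_moment_nonneg)
    (use assms in \<open>auto intro: pair_coeff_mono\<close>)

lemma mean_square_witnesses:
  assumes "sum_squares ys = real (length ys) * \<mu>" "y \<in> set ys" "y\<^sup>2 \<noteq> \<mu>"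
  obtains a b where "a \<in> set ys" "\<mu> < a\<^sup>2" "b \<in> set ys" "b\<^sup>2 < \<mu>"
proof -
  have "(\<Sum>z\<leftarrow>ys. z\<^sup>2 - \<mu>) = 0" "(\<Sum>z\<leftarrow>ys. \<mu> - z\<^sup>2) = 0"
    using assms(1) by (simp_all add: sum_list_subtractf sum_squares_def sum_list_triv)
  then have "\<exists>a\<in>set ys. \<mu> < a\<^sup>2" "\<exists>b\<in>set ys. b\<^sup>2 < \<mu>"
    using assms(2,3) sum_list_nonneg_eq_0_iff[of "map (\<lambda>z. z\<^sup>2 - \<mu>) ys"]
      sum_list_nonneg_eq_0_iff[of "map (\<lambda>z. \<mu> - z\<^sup>2) ys"]
    by (fastforce simp: not_less)+
  then show ?thesis
    using that by blast
qed

lemma product_le_after_rebalancing: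
  fixes a b \<mu> :: real
  assumes "0 \<le> a" "0 \<le> b" "b\<^sup>2 \<le> \<mu>" "\<mu> \<le> a\<^sup>2"
  shows "a * b \<le> sqrt \<mu> * sqrt (a\<^sup>2 + b\<^sup>2 - \<mu>)"
proof (rule power2_le_imp_le)
  have "0 \<le> \<mu>"
    using assms(3) zero_le_power2[of b] by linarith
  have "0 \<le> a\<^sup>2 + b\<^sup>2 - \<mu>"
    using assms(4) zero_le_power2[of b] by linarith
  then have "(sqrt \<mu> * sqrt (a\<^sup>2 + b\<^sup>2 - \<mu>))\<^sup>2 = \<mu> * (a\<^sup>2 + b\<^sup>2 - \<mu>)"
    using \<open>0 \<le> \<mu>\<close> by (simp add: power_mult_distrib)
  also have "\<dots> = (a * b)\<^sup>2 + (a\<^sup>2 - \<mu>) * (\<mu> - b\<^sup>2)"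
    by (simp add: power_mult_distrib algebra_simps)
  finally show "(a * b)\<^sup>2 \<le> (sqrt \<mu> * sqrt (a\<^sup>2 + b\<^sup>2 - \<mu>))\<^sup>2"
    using assms(3,4) by simp
  show "0 \<le> sqrt \<mu> * sqrt (a\<^sup>2 + b\<^sup>2 - \<mu>)"
    using \<open>0 \<le> \<mu>\<close> \<open>0 \<le> a\<^sup>2 + b\<^sup>2 - \<mu>\<close> by simp
qed

lemma sign_mean_rebalance_pair:
  fixes a b \<mu> :: real
  assumes "0 \<le> a" "0 \<le> b" "b\<^sup>2 \<le> \<mu>" "\<mu> \<le> a\<^sup>2"
  shows "(sqrt \<mu>)\<^sup>2 + (sqrt (a\<^sup>2 + b\<^sup>2 - \<mu>))\<^sup>2 = a\<^sup>2 + b\<^sup>2"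
    and "sign_mean (a # b # ys) (\<lambda>T. (T\<^sup>2 - (a\<^sup>2 + b\<^sup>2 + sum_squares ys)) ^ q)
      \<le> sign_mean (sqrt \<mu> # sqrt (a\<^sup>2 + b\<^sup>2 - \<mu>) # ys) (\<lambda>T. (T\<^sup>2 - (a\<^sup>2 + b\<^sup>2 + sum_squares ys)) ^ q)"
proof -
  have "0 \<le> \<mu>" "0 \<le> a\<^sup>2 + b\<^sup>2 - \<mu>"
    using assms(3,4) zero_le_power2[of b] by linarith+
  then show sq_eq: "(sqrt \<mu>)\<^sup>2 + (sqrt (a\<^sup>2 + b\<^sup>2 - \<mu>))\<^sup>2 = a\<^sup>2 + b\<^sup>2"
    by simp
  show "sign_mean (a # b # ys) (\<lambda>T. (T\<^sup>2 - (a\<^sup>2 + b\<^sup>2 + sum_squares ys)) ^ q)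
      \<le> sign_mean (sqrt \<mu> # sqrt (a\<^sup>2 + b\<^sup>2 - \<mu>) # ys) (\<lambda>T. (T\<^sup>2 - (a\<^sup>2 + b\<^sup>2 + sum_squares ys)) ^ q)"
    using sign_mean_pair_mono[OF sq_eq[symmetric] _ product_le_after_rebalancing[OF assms]] assms(1,2)
    unfolding sq_eq by simp
qed

lemma mset_eq_Cons_Cons_remove1:
  assumes "a \<in> set xs" "b \<in> set xs" "a \<noteq> b"
  shows "mset xs = mset (a # b # remove1 b (remove1 a xs))"
proof -
  have remove1_perm: "x \<in> set zs \<Longrightarrow> mset zs = mset (x # remove1 x zs)" for x and zs :: "'a list"
    by (simp add: insert_DiffM)
  have "b \<in> set (remove1 a xs)"
    using assms by (simp add: in_set_remove1)
  then show ?thesis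
    using remove1_perm[OF assms(1)] remove1_perm[OF \<open>b \<in> set (remove1 a xs)\<close>] by (metis mset.simps(2))
qed

lemma sign_mean_le_flat:
  fixes C :: real
  assumes "length ys = K" "\<forall>y\<in>set ys. 0 \<le> y" "sum_squares ys = C" "0 < K"
  shows "sign_mean ys (\<lambda>T. (T\<^sup>2 - C) ^ q) \<le> sign_mean (replicate K (sqrt (C / K))) (\<lambda>T. (T\<^sup>2 - C) ^ q)"
  using assms
proof (induction "length (filter (\<lambda>y. y\<^sup>2 \<noteq> C / K) ys)" arbitrary: ys rule: less_induct)
  case less
  define \<mu> where "\<mu> = C / K"
  have sum_eq: "sum_squares ys = real (length ys) * \<mu>"
    using less.prems unfolding \<mu>_def by simp
  show ?case
  proof (cases "\<exists>y\<in>set ys. y\<^sup>2 \<noteq> \<mu>")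
    case False
    then have "\<forall>y\<in>set ys. y = sqrt \<mu>"
      using less.prems(2) real_sqrt_unique by blast
    then show ?thesis
      using less.prems(1) replicate_length_same unfolding \<mu>_def by fastforce
  next
    case True
    then obtain a b where a: "a \<in> set ys" "\<mu> < a\<^sup>2" and b: "b \<in> set ys" "b\<^sup>2 < \<mu>"
      using mean_square_witnesses[OF sum_eq] by metis
    define rest where "rest = remove1 b (remove1 a ys)"
    define ys' where "ys' = sqrt \<mu> # sqrt (a\<^sup>2 + b\<^sup>2 - \<mu>) # rest"
    have perm: "mset ys = mset (a # b # rest)"
      unfolding rest_def using a b by (intro mset_eq_Cons_Cons_remove1) auto
    then have "set ys = set (a # b # rest)" "length ys = length (a # b # rest)"
      by (metis set_mset_mset, metis size_mset)
    moreover have "0 \<le> \<mu>" "\<mu> \<le> a\<^sup>2 + b\<^sup>2"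
      using a(2) b(2) zero_le_power2[of b] by linarith+
    ultimately have ab: "0 \<le> a" "0 \<le> b" and ys'_props: "length ys' = K" "\<forall>y\<in>set ys'. 0 \<le> y"
      using less.prems(1,2) unfolding ys'_def by auto
    have C_eq: "C = a\<^sup>2 + b\<^sup>2 + sum_squares rest"
      using less.prems(3) sum_squares_perm[OF perm] by simp
    note rebalance = sign_mean_rebalance_pair(1)[OF ab, of \<mu>] sign_mean_rebalance_pair(2)[OF ab, of \<mu> rest q]
    have "sign_mean ys (\<lambda>T. (T\<^sup>2 - C) ^ q) = sign_mean (a # b # rest) (\<lambda>T. (T\<^sup>2 - C) ^ q)"
      by (rule sign_mean_perm[OF perm])
    also have "\<dots> \<le> sign_mean ys' (\<lambda>T. (T\<^sup>2 - C) ^ q)"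
      unfolding C_eq ys'_def using rebalance a(2) b(2) by simp
    also have "\<dots> \<le> sign_mean (replicate K (sqrt (C / K))) (\<lambda>T. (T\<^sup>2 - C) ^ q)"
    proof (rule less.hyps[OF _ ys'_props _ less.prems(4)])
      let ?off = "\<lambda>y. y\<^sup>2 \<noteq> C / K"
      have "length (filter ?off ys') < length (filter ?off (a # b # rest))"
        using \<open>0 \<le> \<mu>\<close> a(2) b(2) unfolding ys'_def \<mu>_def by simp
      then show "length (filter ?off ys') < length (filter ?off ys)"
        by (metis perm mset_filter size_mset)
      show "sum_squares ys' = C"
        unfolding C_eq ys'_def using rebalance(1) a(2) b(2) by simp
    qed
    finally show ?thesis .
  qed
qed

lemma finite_set_pmf_rademacher_vec: "finite (set_pmf (rademacher_vec d))"
  unfolding rademacher_vec_def by (subst set_Pi_pmf) auto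

lemma expectation_rademacher_vec_Suc:
  fixes h :: "(nat \<Rightarrow> real) \<Rightarrow> real"
  shows "measure_pmf.expectation (rademacher_vec (Suc d)) h =
    (measure_pmf.expectation (rademacher_vec d) (\<lambda>r. h (r(d := 1)))
   + measure_pmf.expectation (rademacher_vec d) (\<lambda>r. h (r(d := -1)))) / 2"
proof -
  have "rademacher_vec (Suc d) = pmf_of_set {-1, 1} \<bind> (\<lambda>v. map_pmf (\<lambda>r. r(d := v)) (rademacher_vec d))"
    unfolding rademacher_vec_def lessThan_Suc by (subst Pi_pmf_insert') (auto simp: map_pmf_def)
  then show ?thesis
    by (simp add: pmf_expectation_bind[where A = "{-1, 1}"] finite_set_pmf_rademacher_vec)
qed

lemma expectation_rademacher_vec:
  fixes g :: "real \<Rightarrow> real \<Rightarrow> real"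
  shows "measure_pmf.expectation (rademacher_vec d) (\<lambda>r. g (\<Sum>i<d. y i * r i) (\<Sum>i<d. (y i * r i)\<^sup>2))
     = sign_mean (map y [0..<d]) (\<lambda>T. g T (\<Sum>i<d. (y i)\<^sup>2))"
proof (induction d arbitrary: g)
  case 0
  then show ?case by (simp add: rademacher_vec_def)
next
  case (Suc d)
  have upd: "(\<Sum>i<d. y i * (r(d := v)) i) = (\<Sum>i<d. y i * r i)"
     "(\<Sum>i<d. (y i * (r(d := v)) i)\<^sup>2) = (\<Sum>i<d. (y i * r i)\<^sup>2)" for r :: "nat \<Rightarrow> real" and v
    by (auto intro!: sum.cong)
  have "measure_pmf.expectation (rademacher_vec (Suc d))
      (\<lambda>r. g (\<Sum>i<Suc d. y i * r i) (\<Sum>i<Suc d. (y i * r i)\<^sup>2))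
    = (sign_mean (map y [0..<d]) (\<lambda>T. g (T + y d) ((\<Sum>i<d. (y i)\<^sup>2) + (y d)\<^sup>2))
      + sign_mean (map y [0..<d]) (\<lambda>T. g (T - y d) ((\<Sum>i<d. (y i)\<^sup>2) + (y d)\<^sup>2))) / 2"
    using Suc.IH[of "\<lambda>T S. g (T + y d) (S + (y d)\<^sup>2)"] Suc.IH[of "\<lambda>T S. g (T - y d) (S + (y d)\<^sup>2)"]
    unfolding expectation_rademacher_vec_Suc by (simp add: upd)
  also have "\<dots> = sign_mean (y d # map y [0..<d]) (\<lambda>T. g T (\<Sum>i<Suc d. (y i)\<^sup>2))"
    by simp
  also have "\<dots> = sign_mean (map y [0..<Suc d]) (\<lambda>T. g T (\<Sum>i<Suc d. (y i)\<^sup>2))"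
    by (rule sign_mean_perm) simp
  finally show ?case .
qed

lemma sum_off_diagonal:
  fixes z :: "nat \<Rightarrow> real"
  shows "(\<Sum>i<d. \<Sum>j<d. if i \<noteq> j then z i * z j else 0) = (\<Sum>i<d. z i)\<^sup>2 - (\<Sum>i<d. (z i)\<^sup>2)"
proof -
  have "(\<Sum>i<d. z i)\<^sup>2 = (\<Sum>i<d. \<Sum>j<d. (if i \<noteq> j then z i * z j else 0) + (if j = i then (z i)\<^sup>2 else 0))"
    unfolding power2_eq_square sum_product by (intro sum.cong refl) auto
  then show ?thesis
    by (simp add: sum.distrib)
qed

lemma R_moment_eq_sign_mean:
  "R_moment d y q = sign_mean (map y [0..<d]) (\<lambda>T. (T\<^sup>2 - (\<Sum>i<d. (y i)\<^sup>2)) ^ q)"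
proof -
  have "(\<Sum>i<d. \<Sum>j<d. if i \<noteq> j then y i * y j * r i * r j else 0)
      = (\<Sum>i<d. y i * r i)\<^sup>2 - (\<Sum>i<d. (y i * r i)\<^sup>2)" for r :: "nat \<Rightarrow> real"
    unfolding sum_off_diagonal[where z = "\<lambda>i. y i * r i", symmetric]
    by (intro sum.cong refl) (simp add: mult_ac)
  then show ?thesis
    unfolding R_moment_def
    using expectation_rademacher_vec[where g = "\<lambda>T S. (T\<^sup>2 - S) ^ q"] by simp
qed

lemma sum_choose_Suc:
  fixes h :: "nat \<Rightarrow> real"
  shows "(\<Sum>k\<le>Suc K. of_nat (Suc K choose k) * h k)
    = (\<Sum>k\<le>K. of_nat (K choose k) * h (Suc k)) + (\<Sum>k\<le>K. of_nat (K choose k) * h k)"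
proof -
  have "(\<Sum>k\<le>Suc K. of_nat (Suc K choose k) * h k)
      = h 0 + (\<Sum>k\<le>K. of_nat (K choose k) * h (Suc k)) + (\<Sum>k\<le>K. of_nat (K choose Suc k) * h (Suc k))"
    by (subst sum.atMost_Suc_shift) (simp add: sum.distrib algebra_simps)
  moreover have "h 0 + (\<Sum>k\<le>K. of_nat (K choose Suc k) * h (Suc k)) = (\<Sum>k\<le>Suc K. of_nat (K choose k) * h k)"
    by (subst sum.atMost_Suc_shift) simp
  ultimately show ?thesis
    by simp
qed

lemma expectation_binomial_half:
  fixes f :: "nat \<Rightarrow> real"
  shows "measure_pmf.expectation (binomial_pmf K (1/2)) f = (\<Sum>k\<le>K. of_nat (K choose k) * f k) / 2 ^ K"
proof -
  have "pmf (binomial_pmf K (1/2)) k = of_nat (K choose k) / 2 ^ K" if "k \<le> K" for k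
    using that by (simp add: mult.assoc power_add[symmetric] power_one_over)
  then show ?thesis
    by (subst integral_measure_pmf[of "{..K}"]) (auto simp: sum_divide_distrib intro!: sum.cong)
qed

lemma sign_mean_replicate:
  "sign_mean (replicate K c) g = measure_pmf.expectation (binomial_pmf K (1/2)) (\<lambda>B. g (c * (2 * real B - real K)))"
  unfolding expectation_binomial_half
proof (induction K arbitrary: g)
  case (Suc K)
  have shift: "c * (2 * real k - real K) + c = c * (2 * real (Suc k) - real (Suc K))"
    "c * (2 * real k - real K) - c = c * (2 * real k - real (Suc K))" for k
    by (simp_all add: algebra_simps)
  have "sign_mean (replicate (Suc K) c) g
      = (sign_mean (replicate K c) (\<lambda>T. g (T + c)) + sign_mean (replicate K c) (\<lambda>T. g (T - c))) / 2"
    by simp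
  also have "\<dots> = ((\<Sum>k\<le>K. of_nat (K choose k) * g (c * (2 * real (Suc k) - real (Suc K))))
       + (\<Sum>k\<le>K. of_nat (K choose k) * g (c * (2 * real k - real (Suc K))))) / 2 ^ Suc K"
    unfolding Suc.IH shift by (simp add: add_divide_distrib)
  also have "\<dots> = (\<Sum>k\<le>Suc K. of_nat (Suc K choose k) * g (c * (2 * real k - real (Suc K)))) / 2 ^ Suc K"
    by (subst sum_choose_Suc) simp
  finally show ?case .
qed simp

lemma R_moment_const: "R_moment K (\<lambda>_. c) q = sign_mean (replicate K c) (\<lambda>T. (T\<^sup>2 - real K * c\<^sup>2) ^ q)"
  unfolding R_moment_eq_sign_mean by (simp add: map_replicate_const)

lemma sign_mean_flat_eq_binomial:
  fixes \<rho> :: real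
  assumes "0 < K"
  shows "sign_mean (replicate K (\<rho> / sqrt K)) (\<lambda>T. (T\<^sup>2 - \<rho>\<^sup>2) ^ q) = \<rho> ^ (2 * q) *
    measure_pmf.expectation (binomial_pmf K (1/2)) (\<lambda>B. (((real B - real K / 2) / sqrt (real K / 4))\<^sup>2 - 1) ^ q)"
proof -
  have "((\<rho> / sqrt K * (2 * real B - real K))\<^sup>2 - \<rho>\<^sup>2) ^ q
      = \<rho> ^ (2 * q) * (((real B - real K / 2) / sqrt (real K / 4))\<^sup>2 - 1) ^ q" for B
  proof -
    have "(\<rho> / sqrt K * (2 * real B - real K))\<^sup>2 = \<rho>\<^sup>2 * ((2 * real B - real K)\<^sup>2 / K)"
      by (simp add: power_mult_distrib power_divide)
    then have "(\<rho> / sqrt K * (2 * real B - real K))\<^sup>2 - \<rho>\<^sup>2 = \<rho>\<^sup>2 * ((2 * real B - real K)\<^sup>2 / K - 1)"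
      by (simp add: right_diff_distrib)
    also have "(2 * real B - real K)\<^sup>2 / K = ((real B - real K / 2) / sqrt (real K / 4))\<^sup>2"
      using assms by (simp add: power_divide power2_eq_square field_simps)
    finally show ?thesis
      by (simp add: power_mult_distrib power_mult)
  qed
  then show ?thesis
    unfolding sign_mean_replicate by simp
qed

lemma R_moment_eq_sign_mean_nonzero:
  "R_moment n x q = sign_mean (map (\<lambda>i. \<bar>x i\<bar>) (filter (\<lambda>i. x i \<noteq> 0) [0..<n])) (\<lambda>T. (T\<^sup>2 - (l2norm n x)\<^sup>2) ^ q)"
  unfolding R_moment_eq_sign_mean l2norm_def sign_mean_filter_nonzero[symmetric]
  by (simp add: sum_nonneg)

lemma sum_squares_nonzero:
  "sum_squares (map (\<lambda>i. \<bar>x i\<bar>) (filter (\<lambda>i. x i \<noteq> 0) [0..<n])) = (l2norm n x)\<^sup>2"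
proof -
  have "sum_squares (map (\<lambda>i. \<bar>x i\<bar>) (filter (\<lambda>i. x i \<noteq> 0) xs)) = (\<Sum>i\<leftarrow>xs. (x i)\<^sup>2)" for xs
    by (induction xs) auto
  moreover have "0 \<le> (\<Sum>i<n. (x i)\<^sup>2)"
    by (simp add: sum_nonneg)
  ultimately show ?thesis
    unfolding l2norm_def by (simp add: sum_list_sum_nth atLeast0LessThan)
qed

lemma length_filter_nonzero: "length (filter (\<lambda>i. x i \<noteq> 0) [0..<n]) = l0norm n x"
proof -
  have "{i. i < n \<and> x ([0..<n] ! i) \<noteq> 0} = {i. i < n \<and> x i \<noteq> 0}"
    by auto
  then show ?thesis
    unfolding l0norm_def by (simp add: length_filter_conv_card)
qed

theorem theorem3:
  fixes n q :: nat and x :: "nat \<Rightarrow> real"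
  assumes "\<exists>i<n. x i \<noteq> 0" and "q > 0"
  shows "R_moment n x q \<le> R_moment (l0norm n x) (\<lambda>_. l2norm n x / sqrt (real (l0norm n x))) q
    \<and> R_moment (l0norm n x) (\<lambda>_. l2norm n x / sqrt (real (l0norm n x))) q
        = l2norm n x ^ (2*q) * measure_pmf.expectation (binomial_pmf (l0norm n x) (1/2))
            (\<lambda>B. (((real B - real (l0norm n x) / 2) / sqrt (real (l0norm n x) / 4))^2 - 1) ^ q)"
proof -
  define K where "K = l0norm n x"
  define \<rho> where "\<rho> = l2norm n x"
  define ys where "ys = map (\<lambda>i. \<bar>x i\<bar>) (filter (\<lambda>i. x i \<noteq> 0) [0..<n])"
  have "0 < K"
    using assms(1) unfolding K_def l0norm_def by (subst card_gt_0_iff) auto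
  have "0 \<le> \<rho>"
    unfolding \<rho>_def l2norm_def by (simp add: sum_nonneg)
  then have flat: "R_moment K (\<lambda>_. \<rho> / sqrt K) q
      = sign_mean (replicate K (sqrt (\<rho>\<^sup>2 / K))) (\<lambda>T. (T\<^sup>2 - \<rho>\<^sup>2) ^ q)"
    using \<open>0 < K\<close> by (simp add: R_moment_const power_divide real_sqrt_divide)
  have "R_moment n x q = sign_mean ys (\<lambda>T. (T\<^sup>2 - \<rho>\<^sup>2) ^ q)"
    unfolding ys_def \<rho>_def by (rule R_moment_eq_sign_mean_nonzero)
  also have "\<dots> \<le> R_moment K (\<lambda>_. \<rho> / sqrt K) q"
  proof -
    have "length ys = K" "\<forall>y\<in>set ys. 0 \<le> y" "sum_squares ys = \<rho>\<^sup>2"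
      unfolding ys_def K_def \<rho>_def by (auto simp: length_filter_nonzero sum_squares_nonzero)
    then show ?thesis
      unfolding flat using \<open>0 < K\<close> by (rule sign_mean_le_flat)
  qed
  finally show ?thesis
    using flat \<open>0 \<le> \<rho>\<close> \<open>0 < K\<close> sign_mean_flat_eq_binomial[OF \<open>0 < K\<close>, of \<rho> q]
    unfolding K_def \<rho>_def by (simp add: real_sqrt_divide)
qed

end
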